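(* Let $F\neq\{0\}$ be a finite abelian group, and let $A$ and $A_1$ be skew braces on $F\times\mathbb{Z}/2\mathbb{Z}$ constructed from data $(\phi,y,z)$ and $(\phi_1,y_1,z_1)$ respectively, as described in the context. Then $A$ and $A_1$ are isomorphic if and only if there exists $\sigma\in\operatorname{Aut}(F)$ such that $\phi_1=\sigma\circ\phi\circ\sigma^{-1}$, $\sigma(y)=y_1$, and $z_1-\sigma(z)\in\phi_1(F)$.
   Context: Admissible data on a finite abelian group $F\ne\{0\}$: a triple $(\phi,y,z)$ with $\phi\in\operatorname{End}(F)$, $y,z\in F$, $2y=0$, $\phi(z)=\phi(y)-2z$, $\phi(\phi(f))=-2\phi(f)$ for all $f\in F$, and such that the map $\psi\colon F\times\mathbb{Z}/2\mathbb{Z}\times\mathbb{Z}/2\mathbb{Z}\to F$, $\psi(f,k_1,k_2)=[k_2](\phi(f)-[k_1]z)$, is surjective. Here for $k\in\mathbb{Z}/2\mathbb{Z}$, $[k]\in\{0,1\}$ is its representative. The skew brace built from $(\phi,y,z)$ is the set $F\times\mathbb{Z}/2\mathbb{Z}$ with $(f_1,k_1)+(f_2,k_2)=(f_1+(-1)^{k_1}f_2+[k_1][k_2]y,\,k_1+k_2)$ and $(f_1,k_1)\circ(f_2,k_2)=(f_1+(-1)^{k_1}f_2+\psi(f_1,k_1,k_2)+[k_1][k_2]y,\,k_1+k_2)$. (A skew brace is a triple $(A,+,\circ)$ of two group structures with $a\circ(b+c)=a\circ b-a+a\circ c$; an isomorphism of skew braces is a bijection that is a homomorphism for both operations.) 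*)

theory Defs
  imports Main
begin

text \<open>The finite abelian group F is the universe of a type of class
  finite + ab_group_add; Z/2Z is modelled by bool (True = 1, addition = xor),
  and for k in Z/2Z, [k] f is f if k = 1 and 0 if k = 0.\<close>

definition is_endo :: "('a::ab_group_add \<Rightarrow> 'a) \<Rightarrow> bool" where
  "is_endo \<phi> \<longleftrightarrow> (\<forall>a b. \<phi> (a + b) = \<phi> a + \<phi> b)"

definition is_aut :: "('a::ab_group_add \<Rightarrow> 'a) \<Rightarrow> bool" where
  "is_aut \<sigma> \<longleftrightarrow> is_endo \<sigma> \<and> bij \<sigma>"

definition zmul :: "bool \<Rightarrow> 'a::ab_group_add \<Rightarrow> 'a" where
  "zmul k x = (if k then x else 0)"

definition zsign :: "bool \<Rightarrow> 'a::ab_group_add \<Rightarrow> 'a" where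
  "zsign k x = (if k then - x else x)"

definition psi :: "('a::ab_group_add \<Rightarrow> 'a) \<Rightarrow> 'a \<Rightarrow> 'a \<Rightarrow> bool \<Rightarrow> bool \<Rightarrow> 'a" where
  "psi \<phi> z f k1 k2 = zmul k2 (\<phi> f - zmul k1 z)"

definition admissible :: "('a::ab_group_add \<Rightarrow> 'a) \<Rightarrow> 'a \<Rightarrow> 'a \<Rightarrow> bool" where
  "admissible \<phi> y z \<longleftrightarrow>
     is_endo \<phi> \<and> y + y = 0 \<and> \<phi> z = \<phi> y - (z + z) \<and>
     (\<forall>f. \<phi> (\<phi> f) = - (\<phi> f + \<phi> f)) \<and>
     (\<forall>w. \<exists>f k1 k2. psi \<phi> z f k1 k2 = w)"

definition sb_add :: "'a::ab_group_add \<Rightarrow> ('a \<times> bool) \<Rightarrow> ('a \<times> bool) \<Rightarrow> ('a \<times> bool)" where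
  "sb_add y a b = (case a of (f1, k1) \<Rightarrow> case b of (f2, k2) \<Rightarrow>
      (f1 + zsign k1 f2 + zmul (k1 \<and> k2) y, k1 \<noteq> k2))"

definition sb_circ :: "('a::ab_group_add \<Rightarrow> 'a) \<Rightarrow> 'a \<Rightarrow> 'a \<Rightarrow> ('a \<times> bool) \<Rightarrow> ('a \<times> bool) \<Rightarrow> ('a \<times> bool)" where
  "sb_circ \<phi> y z a b = (case a of (f1, k1) \<Rightarrow> case b of (f2, k2) \<Rightarrow>
      (f1 + zsign k1 f2 + psi \<phi> z f1 k1 k2 + zmul (k1 \<and> k2) y, k1 \<noteq> k2))"

definition skew_brace_iso :: "('a \<Rightarrow> 'a \<Rightarrow> 'a) \<Rightarrow> ('a \<Rightarrow> 'a \<Rightarrow> 'a) \<Rightarrow>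
    ('b \<Rightarrow> 'b \<Rightarrow> 'b) \<Rightarrow> ('b \<Rightarrow> 'b \<Rightarrow> 'b) \<Rightarrow> ('a \<Rightarrow> 'b) \<Rightarrow> bool" where
  "skew_brace_iso add1 circ1 add2 circ2 h \<longleftrightarrow> bij h \<and>
     (\<forall>a b. h (add1 a b) = add2 (h a) (h b)) \<and>
     (\<forall>a b. h (circ1 a b) = circ2 (h a) (h b))"

definition skew_braces_isomorphic :: "('a \<Rightarrow> 'a \<Rightarrow> 'a) \<Rightarrow> ('a \<Rightarrow> 'a \<Rightarrow> 'a) \<Rightarrow>
    ('b \<Rightarrow> 'b \<Rightarrow> 'b) \<Rightarrow> ('b \<Rightarrow> 'b \<Rightarrow> 'b) \<Rightarrow> bool" where
  "skew_braces_isomorphic add1 circ1 add2 circ2 \<longleftrightarrow>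
     (\<exists>h. skew_brace_iso add1 circ1 add2 circ2 h)"

end

theory Submission
  imports Defs "HOL.Modules"
begin

text \<open>Every element (g, 0) is a "brace defect" a \<circ> b - (a + b) of A, because \<psi> is onto; an
  isomorphism carries defects of A to defects of A1, which all lie in F \<times> 0.  So an
  isomorphism maps F \<times> 0 into itself, hence, by finiteness, onto itself, and therefore
  preserves the Z/2Z-component.  Such a map has the form (f, k) \<mapsto> (\<sigma> f + [k] t, k) with
  \<sigma> \<in> Aut(F), and comparing both operations on a few pairs shows that it is an isomorphism
  exactly when \<phi>1 \<sigma> = \<sigma> \<phi>, \<sigma> y = y1 and z1 = \<sigma> z + \<phi>1 t.\<close>

lemma is_endo_iff_additive: "is_endo f \<longleftrightarrow> additive f"
  by (simp add: is_endo_def additive_def)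

lemma sb_circ_eq_sb_add_psi:
  "sb_circ \<phi> y z (f1, k1) (f2, k2) = sb_add y (psi \<phi> z f1 k1 k2, False) (sb_add y (f1, k1) (f2, k2))"
  by (auto simp: sb_circ_def sb_add_def zmul_def zsign_def algebra_simps)

lemma sb_add_right_cancel:
  "sb_add y (g, k) c = sb_add y (g', k') c \<Longrightarrow> g = g' \<and> k = k'"
  by (cases c) (auto simp: sb_add_def zmul_def zsign_def split: if_splits)

lemma inj_self_map_preserves_complement:
  assumes "inj h" "finite S" "h ` S \<subseteq> S" "x \<notin> S"
  shows "h x \<notin> S"
proof
  assume "h x \<in> S"
  also have "S = h ` S"
    using endo_inj_surj[of S h] assms(1-3) by (simp add: inj_on_subset)
  finally show False
    using assms(1,4) by (auto dest: injD)
qed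

lemma sb_iso_preserves_parity:
  fixes h :: "'a::{finite, ab_group_add} \<times> bool \<Rightarrow> 'a \<times> bool"
  assumes psi_onto: "\<forall>w. \<exists>f k1 k2. psi \<phi> z f k1 k2 = w"
    and iso: "skew_brace_iso (sb_add y) (sb_circ \<phi> y z) (sb_add y1) (sb_circ \<phi>1 y1 z1) h"
  shows "snd (h a) = snd a"
proof -
  have h_add: "\<And>a b. h (sb_add y a b) = sb_add y1 (h a) (h b)"
    and h_circ: "\<And>a b. h (sb_circ \<phi> y z a b) = sb_circ \<phi>1 y1 z1 (h a) (h b)"
    using iso by (auto simp: skew_brace_iso_def)
  have even: "\<not> snd (h (g, False))" for g
  proof -
    obtain f k1 k2 where g: "psi \<phi> z f k1 k2 = g"
      using psi_onto by blast
    obtain f' k1' f'' k2' where hf: "h (f, k1) = (f', k1')" and h0: "h (0, k2) = (f'', k2')"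
      by fastforce
    let ?s = "h (sb_add y (f, k1) (0, k2))"
    have "sb_add y1 (h (g, False)) ?s = h (sb_circ \<phi> y z (f, k1) (0, k2))"
      by (simp add: sb_circ_eq_sb_add_psi g h_add)
    also have "\<dots> = sb_circ \<phi>1 y1 z1 (f', k1') (f'', k2')"
      by (simp only: h_circ hf h0)
    also have "\<dots> = sb_add y1 (psi \<phi>1 z1 f' k1' k2', False) ?s"
      by (simp add: sb_circ_eq_sb_add_psi h_add hf h0)
    finally show ?thesis
      by (metis prod.collapse sb_add_right_cancel)
  qed
  have "inj h"
    using iso by (simp add: skew_brace_iso_def bij_is_inj)
  moreover have "h ` (UNIV \<times> {False}) \<subseteq> UNIV \<times> {False}"
    using even by (auto simp: image_subset_iff mem_Times_iff)
  ultimately have odd: "snd (h (g, True))" for g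
    using inj_self_map_preserves_complement[of h "UNIV \<times> {False}" "(g, True)"]
    by (auto simp: mem_Times_iff)
  show ?thesis
    using even odd by (cases a, cases "snd a") auto
qed

definition sb_map :: "('a::ab_group_add \<Rightarrow> 'a) \<Rightarrow> 'a \<Rightarrow> 'a \<times> bool \<Rightarrow> 'a \<times> bool" where
  "sb_map \<sigma> t = (\<lambda>(f, k). (\<sigma> f + zmul k t, k))"

lemma parity_preserving_add_hom_is_sb_map:
  assumes parity: "\<And>a. snd (h a) = snd a"
    and h_add: "\<And>a b. h (sb_add y a b) = sb_add y1 (h a) (h b)"
  shows "\<exists>\<sigma> t. h = sb_map \<sigma> t"
proof -
  define \<sigma> where "\<sigma> f = fst (h (f, False))" for f
  define t where "t = fst (h (0, True))"
  have h_even: "h (f, False) = (\<sigma> f, False)" for f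
    using parity[of "(f, False)"] by (cases "h (f, False)") (simp add: \<sigma>_def)
  have h_odd: "h (f, True) = (\<sigma> f + t, True)" for f
  proof -
    have "h (f, True) = h (sb_add y (f, False) (0, True))"
      by (simp add: sb_add_def zsign_def zmul_def)
    also have "\<dots> = sb_add y1 (\<sigma> f, False) (h (0, True))"
      by (simp add: h_add h_even)
    also have "h (0, True) = (t, True)"
      using parity[of "(0, True)"] by (cases "h (0, True)") (simp add: t_def)
    finally show ?thesis
      by (simp add: sb_add_def zsign_def zmul_def)
  qed
  have "h = sb_map \<sigma> t"
  proof
    fix a :: "'a \<times> bool"
    show "h a = sb_map \<sigma> t a"
      by (cases a, cases "snd a") (auto simp: sb_map_def zmul_def h_even h_odd)
  qed
  then show ?thesis
    by blast
qed

lemma sb_iso_is_sb_map: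
  fixes h :: "'a::{finite, ab_group_add} \<times> bool \<Rightarrow> 'a \<times> bool"
  assumes psi_onto: "\<forall>w. \<exists>f k1 k2. psi \<phi> z f k1 k2 = w"
    and iso: "skew_brace_iso (sb_add y) (sb_circ \<phi> y z) (sb_add y1) (sb_circ \<phi>1 y1 z1) h"
  shows "\<exists>\<sigma> t. h = sb_map \<sigma> t"
proof -
  have "\<And>a b. h (sb_add y a b) = sb_add y1 (h a) (h b)"
    using iso unfolding skew_brace_iso_def by blast
  then show ?thesis
    by (rule parity_preserving_add_hom_is_sb_map[OF sb_iso_preserves_parity[OF psi_onto iso]])
qed

lemma bij_sb_map_iff:
  fixes \<sigma> :: "'a::{finite, ab_group_add} \<Rightarrow> 'a"
  shows "bij (sb_map \<sigma> t) \<longleftrightarrow> bij \<sigma>"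
proof -
  have "inj (sb_map \<sigma> t) \<longleftrightarrow> inj \<sigma>"
  proof
    assume inj: "inj (sb_map \<sigma> t)"
    show "inj \<sigma>"
    proof (rule injI)
      fix a b
      assume "\<sigma> a = \<sigma> b"
      then have "sb_map \<sigma> t (a, False) = sb_map \<sigma> t (b, False)"
        by (simp add: sb_map_def zmul_def)
      then show "a = b"
        using injD[OF inj] by blast
    qed
  next
    assume "inj \<sigma>"
    then show "inj (sb_map \<sigma> t)"
      by (auto intro!: injI simp: sb_map_def dest: injD)
  qed
  then show ?thesis
    by (metis bij_def finite_UNIV finite_UNIV_inj_surj)
qed

lemmas sb_defs = sb_map_def sb_add_def sb_circ_def psi_def zsign_def zmul_def

lemma sb_map_iso_conditions:
  fixes \<phi> \<phi>1 \<sigma> :: "'a::{finite, ab_group_add} \<Rightarrow> 'a"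
  assumes "additive \<phi>"
    and iso: "skew_brace_iso (sb_add y) (sb_circ \<phi> y z) (sb_add y1) (sb_circ \<phi>1 y1 z1) (sb_map \<sigma> t)"
  shows "is_aut \<sigma> \<and> \<phi>1 \<circ> \<sigma> = \<sigma> \<circ> \<phi> \<and> \<sigma> y = y1 \<and> z1 = \<phi>1 t + \<sigma> z"
proof -
  have bij: "bij \<sigma>"
    and h_add: "\<And>a b. sb_map \<sigma> t (sb_add y a b) = sb_add y1 (sb_map \<sigma> t a) (sb_map \<sigma> t b)"
    and h_circ: "\<And>a b. sb_map \<sigma> t (sb_circ \<phi> y z a b)
                         = sb_circ \<phi>1 y1 z1 (sb_map \<sigma> t a) (sb_map \<sigma> t b)"
    using iso by (auto simp: skew_brace_iso_def bij_sb_map_iff)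
  have "additive \<sigma>"
  proof
    show "\<sigma> (a + b) = \<sigma> a + \<sigma> b" for a b
      using h_add[of "(a, False)" "(b, False)"] by (simp add: sb_defs)
  qed
  then interpret \<sigma>: additive \<sigma> .
  have "\<phi>1 (\<sigma> f) = \<sigma> (\<phi> f)" for f
    using h_circ[of "(f, False)" "(0, True)"] by (simp add: sb_defs \<sigma>.add \<sigma>.zero algebra_simps)
  moreover have y: "\<sigma> y = y1"
    using h_add[of "(0, True)" "(0, True)"] by (simp add: sb_defs)
  moreover have "z1 = \<phi>1 t + \<sigma> z"
    using h_circ[of "(0, True)" "(0, True)"] y additive.zero[OF assms(1)]
    by (simp add: sb_defs \<sigma>.add \<sigma>.diff \<sigma>.zero algebra_simps)
  ultimately show ?thesis
    using bij \<open>additive \<sigma>\<close> by (auto simp: is_aut_def is_endo_iff_additive)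
qed

lemma sb_map_iso_of_conditions:
  fixes \<phi> \<phi>1 \<sigma> :: "'a::{finite, ab_group_add} \<Rightarrow> 'a"
  assumes "additive \<phi>1"
    and "is_aut \<sigma>" "\<phi>1 \<circ> \<sigma> = \<sigma> \<circ> \<phi>" and y: "\<sigma> y = y1" and z1: "z1 = \<phi>1 t + \<sigma> z"
  shows "skew_brace_iso (sb_add y) (sb_circ \<phi> y z) (sb_add y1) (sb_circ \<phi>1 y1 z1) (sb_map \<sigma> t)"
proof -
  have bij: "bij \<sigma>" and "additive \<sigma>" and comm: "\<And>f. \<phi>1 (\<sigma> f) = \<sigma> (\<phi> f)"
    using assms(2,3) by (auto simp: is_aut_def is_endo_iff_additive fun_eq_iff)
  then interpret \<sigma>: additive \<sigma> by simp
  note hom = \<sigma>.add \<sigma>.minus \<sigma>.diff additive.add[OF assms(1)] comm y z1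
  show ?thesis
    unfolding skew_brace_iso_def bij_sb_map_iff
  proof (intro conjI allI bij)
    fix a b :: "'a \<times> bool"
    obtain f1 k1 f2 k2 where ab: "a = (f1, k1)" "b = (f2, k2)"
      by fastforce
    show "sb_map \<sigma> t (sb_add y a b) = sb_add y1 (sb_map \<sigma> t a) (sb_map \<sigma> t b)"
      unfolding ab by (cases k1; cases k2) (simp_all add: sb_defs hom algebra_simps)
    show "sb_map \<sigma> t (sb_circ \<phi> y z a b) = sb_circ \<phi>1 y1 z1 (sb_map \<sigma> t a) (sb_map \<sigma> t b)"
      unfolding ab by (cases k1; cases k2) (simp_all add: sb_defs hom algebra_simps)
  qed
qed

lemma sb_map_iso_iff:
  fixes \<phi> \<phi>1 \<sigma> :: "'a::{finite, ab_group_add} \<Rightarrow> 'a"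
  assumes "additive \<phi>" "additive \<phi>1"
  shows "skew_brace_iso (sb_add y) (sb_circ \<phi> y z) (sb_add y1) (sb_circ \<phi>1 y1 z1) (sb_map \<sigma> t)
    \<longleftrightarrow> is_aut \<sigma> \<and> \<phi>1 \<circ> \<sigma> = \<sigma> \<circ> \<phi> \<and> \<sigma> y = y1 \<and> z1 = \<phi>1 t + \<sigma> z"
  using sb_map_iso_conditions[OF assms(1)] sb_map_iso_of_conditions[OF assms(2)] by blast

lemma conj_by_bij_iff_comp:
  assumes "bij \<sigma>"
  shows "\<phi>1 = \<sigma> \<circ> \<phi> \<circ> inv \<sigma> \<longleftrightarrow> \<phi>1 \<circ> \<sigma> = \<sigma> \<circ> \<phi>"
proof
  assume "\<phi>1 = \<sigma> \<circ> \<phi> \<circ> inv \<sigma>"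
  then show "\<phi>1 \<circ> \<sigma> = \<sigma> \<circ> \<phi>"
    using bij_is_inj[OF assms] by (simp add: fun_eq_iff)
next
  assume "\<phi>1 \<circ> \<sigma> = \<sigma> \<circ> \<phi>"
  then show "\<phi>1 = \<sigma> \<circ> \<phi> \<circ> inv \<sigma>"
    using bij_is_surj[OF assms] by (metis comp_assoc comp_id surj_iff)
qed

theorem mainTheorem17:
  fixes \<phi> \<phi>1 :: "'a::{finite, ab_group_add} \<Rightarrow> 'a" and y z y1 z1 :: 'a
  assumes "(UNIV :: 'a set) \<noteq> {0}"
    and "admissible \<phi> y z"
    and "admissible \<phi>1 y1 z1"
  shows "skew_braces_isomorphic (sb_add y) (sb_circ \<phi> y z) (sb_add y1) (sb_circ \<phi>1 y1 z1)
     \<longleftrightarrow> (\<exists>\<sigma>. is_aut \<sigma> \<and> \<phi>1 = \<sigma> \<circ> \<phi> \<circ> inv \<sigma> \<and> \<sigma> y = y1 \<and> z1 - \<sigma> z \<in> range \<phi>1)"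
proof -
  have additive: "additive \<phi>" "additive \<phi>1"
    and psi_onto: "\<forall>w. \<exists>f k1 k2. psi \<phi> z f k1 k2 = w"
    using assms(2,3) by (auto simp: admissible_def is_endo_iff_additive)
  have "skew_braces_isomorphic (sb_add y) (sb_circ \<phi> y z) (sb_add y1) (sb_circ \<phi>1 y1 z1)
      \<longleftrightarrow> (\<exists>\<sigma> t. skew_brace_iso (sb_add y) (sb_circ \<phi> y z) (sb_add y1) (sb_circ \<phi>1 y1 z1)
                      (sb_map \<sigma> t))"
    unfolding skew_braces_isomorphic_def using sb_iso_is_sb_map[OF psi_onto] by blast
  also have "\<dots> \<longleftrightarrow> (\<exists>\<sigma>. is_aut \<sigma> \<and> \<phi>1 \<circ> \<sigma> = \<sigma> \<circ> \<phi> \<and> \<sigma> y = y1 \<and> (\<exists>t. z1 = \<phi>1 t + \<sigma> z))"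
    by (simp add: sb_map_iso_iff[OF additive])
  also have "\<dots> \<longleftrightarrow> (\<exists>\<sigma>. is_aut \<sigma> \<and> \<phi>1 = \<sigma> \<circ> \<phi> \<circ> inv \<sigma> \<and> \<sigma> y = y1 \<and> z1 - \<sigma> z \<in> range \<phi>1)"
    by (simp add: is_aut_def image_iff diff_eq_eq conj_by_bij_iff_comp cong: conj_cong)
  finally show ?thesis .
qed

end
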